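(* Let $n\ge 2$ participants be partitioned as $[n]=H\sqcup C$ with $H\neq\emptyset$ (honest participants $H$, corrupt participants $C$). Suppose each participant $i$ holds one qubit $Q_i$, and the joint state of $Q_1,\dots,Q_n$ together with any auxiliary systems controlled by the corrupt participants is arbitrary (possibly entangled, and, after purifying into the corrupt participants' systems, assumed pure). Entanglement verification proceeds as follows: each honest participant $i\in H$ prepares $n-1$ fresh qubits in $\lvert 0\rangle$, applies a controlled-NOT with $Q_i$ as control and each fresh qubit as target, and sends one of these pseudo-copies to each other participant $j\neq i$; each corrupt participant sends to each honest participant an arbitrary qubit of its choice (possibly entangled with anything). Each honest participant $i$ then holds $n$ qubits ($Q_i$ and one qubit received from each $j\neq i$) and performs the two-outcome projective measurement $\{\Pi,\,I-\Pi\}$, where $\Pi$ is the projector onto $\mathrm{span}\{\lvert 0^n\rangle,\lvert 1^n\rangle\}$. If every honest participant obtains the outcome $\Pi$ (verification succeeds), then the post-measurement joint state is of the form $$\alpha\,\lvert 00\ldots 0\rangle_H\lvert\psi_0\rangle_C+\beta\,\lvert 11\ldots 1\rangle_H\lvert\psi_1\rangle_C,$$ where the subsystem $H$ consists of all qubits in the possession of the honest participants, the subsystem $C$ consists of all other systems (those held by corrupt participants, including pseudo-copies sent to them and their auxiliary systems), $\lvert\psi_0\rangle,\lvert\psi_1\rangle$ are unit vectors, and $\alpha,\beta\in\mathbb{C}$ satisfy $|\alpha|^2+|\beta|^2=1$. In particular this state is invariant under any permutation of the honest participants.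
   Context: Computational basis $\{\lvert 0\rangle,\lvert1\rangle\}$; $\lvert 0^n\rangle=\lvert 0\cdots0\rangle$, $\lvert 1^n\rangle=\lvert1\cdots1\rangle$ on $n$ qubits. A controlled-NOT applied to a target in $\lvert0\rangle$ creates a "pseudo-copy" of the control qubit in the computational basis. Communication between participants is over private authenticated quantum channels. *)

theory Defs
  imports Complex_Main
begin

text \<open>Participants are 0,...,n-1; H is the set of honest ones, C = {..<n} - H.
  Quantum states are amplitude functions on computational-basis configurations.
  A configuration of a family of qubits labelled by a set S is a function
  S-labels => bool that is False outside S.\<close>

definition cfg :: "'a set \<Rightarrow> ('a \<Rightarrow> bool) set" where
  "cfg S = {f. \<forall>x. x \<notin> S \<longrightarrow> \<not> f x}"

definition unit_vec :: "('a::finite \<Rightarrow> complex) \<Rightarrow> bool" where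
  "unit_vec v \<longleftrightarrow> (\<Sum>x\<in>UNIV. (cmod (v x))^2) = 1"

text \<open>Qubits held by honest participants after the exchange: label (i,k) with i in H,
  k < n: (i,i) is Q_i, (i,k) for k /= i is the qubit that i received from k.\<close>
definition HQ :: "nat \<Rightarrow> nat set \<Rightarrow> (nat \<times> nat) set" where
  "HQ n H = {(i,k). i \<in> H \<and> k < n}"

text \<open>Pseudo-copies sent by honest i to corrupt j: label (i,j).\<close>
definition CH :: "nat \<Rightarrow> nat set \<Rightarrow> (nat \<times> nat) set" where
  "CH n H = {(i,j). i \<in> H \<and> j < n \<and> j \<notin> H}"

text \<open>Qubits sent by corrupt j to honest i: label (j,i).\<close>
definition SC :: "nat \<Rightarrow> nat set \<Rightarrow> (nat \<times> nat) set" where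
  "SC n H = {(j,i). j < n \<and> j \<notin> H \<and> i \<in> H}"

text \<open>Initial pure state Phi on Q_H (configurations in cfg H) tensor 'r, where the
  finite type 'r is everything else (Q_j for corrupt j, auxiliary systems,
  purification). Unit norm.\<close>
definition init_state :: "nat set \<Rightarrow> ((nat \<Rightarrow> bool) \<times> 'r::finite \<Rightarrow> complex) \<Rightarrow> bool" where
  "init_state H \<Phi> \<longleftrightarrow>
     (\<Sum>x\<in>cfg H. \<Sum>r\<in>UNIV. (cmod (\<Phi> (x, r)))^2) = 1"

text \<open>Most general (purified) action of the corrupt participants: an isometry V from
  (pseudo-copies received by C) tensor 'r to (qubits sent by C to H) tensor 'c,
  where the finite type 'c is the corrupt participants' remaining system.
  Matrix entries: V (output) (input).\<close>
definition isometry_C ::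
  "nat \<Rightarrow> nat set \<Rightarrow> ((nat \<times> nat \<Rightarrow> bool) \<times> 'c::finite \<Rightarrow> (nat \<times> nat \<Rightarrow> bool) \<times> 'r::finite \<Rightarrow> complex) \<Rightarrow> bool" where
  "isometry_C n H V \<longleftrightarrow>
     (\<forall>a \<in> cfg (CH n H) \<times> UNIV. \<forall>b \<in> cfg (CH n H) \<times> UNIV.
        (\<Sum>y \<in> cfg (SC n H) \<times> UNIV. cnj (V y a) * V y b) = (if a = b then 1 else 0))"

text \<open>Honest i CNOT-copies Q_i to each j /= i; copies to honest k are held by k as qubit (k,i),
  copies to corrupt j are inputs of V; outputs of V labelled (j,i) are held by i as (i,j).\<close>
definition pre_state ::
  "nat \<Rightarrow> nat set \<Rightarrow> ((nat \<Rightarrow> bool) \<times> 'r::finite \<Rightarrow> complex)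
   \<Rightarrow> ((nat \<times> nat \<Rightarrow> bool) \<times> 'c::finite \<Rightarrow> (nat \<times> nat \<Rightarrow> bool) \<times> 'r \<Rightarrow> complex)
   \<Rightarrow> (nat \<times> nat \<Rightarrow> bool) \<times> 'c \<Rightarrow> complex" where
  "pre_state n H \<Phi> V = (\<lambda>(h, c).
     if h \<in> cfg (HQ n H) \<and> (\<forall>i\<in>H. \<forall>k\<in>H. h (i, k) = h (k, k)) then
       (\<Sum>r\<in>UNIV. \<Phi> (\<lambda>i. i \<in> H \<and> h (i, i), r) *
          V (\<lambda>(j, i). j < n \<and> j \<notin> H \<and> i \<in> H \<and> h (i, j), c)
            (\<lambda>(i, j). i \<in> H \<and> j < n \<and> j \<notin> H \<and> h (i, i), r))
     else 0)"

text \<open>Each honest i measures {Pi, I - Pi} on its n qubits (i,0),...,(i,n-1), Pi the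
  projector onto span{|0^n>, |1^n>}. Joint outcome "all Pi" projects onto:\<close>
definition honest_success :: "nat \<Rightarrow> nat set \<Rightarrow> (nat \<times> nat \<Rightarrow> bool) \<Rightarrow> bool" where
  "honest_success n H h \<longleftrightarrow> (\<forall>i\<in>H. \<forall>k<n. h (i, k) = h (i, i))"

definition projected ::
  "nat \<Rightarrow> nat set \<Rightarrow> ((nat \<times> nat \<Rightarrow> bool) \<times> 'c \<Rightarrow> complex) \<Rightarrow> (nat \<times> nat \<Rightarrow> bool) \<times> 'c \<Rightarrow> complex" where
  "projected n H \<Psi> = (\<lambda>(h, c). if honest_success n H h then \<Psi> (h, c) else 0)"

definition success_prob ::
  "nat \<Rightarrow> nat set \<Rightarrow> ((nat \<times> nat \<Rightarrow> bool) \<times> 'c::finite \<Rightarrow> complex) \<Rightarrow> real" where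
  "success_prob n H \<Psi> = (\<Sum>h\<in>cfg (HQ n H). \<Sum>c\<in>UNIV. (cmod (projected n H \<Psi> (h, c)))^2)"

definition post_state ::
  "nat \<Rightarrow> nat set \<Rightarrow> ((nat \<times> nat \<Rightarrow> bool) \<times> 'c::finite \<Rightarrow> complex) \<Rightarrow> (nat \<times> nat \<Rightarrow> bool) \<times> 'c \<Rightarrow> complex" where
  "post_state n H \<Psi> = (\<lambda>hc. projected n H \<Psi> hc / complex_of_real (sqrt (success_prob n H \<Psi>)))"

end

theory Submission
  imports Defs
begin

text \<open>
  The state before the honest measurement, \<open>pre_state\<close>, is supported on
  honest configurations in which every honest participant's copy of \<open>Q_i\<close> agrees with
  \<open>Q_i\<close> itself (CNOT pseudo-copies).  The success projector additionally forces every
  honest participant to see the same bit on all of its \<open>n\<close> qubits.  Because the honest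
  participants hold copies of each other's qubits, these two constraints chain together:
  a surviving honest configuration is either all-zero or all-one on the honest qubits.

  Hence the projected (unnormalised) state is supported on exactly two honest
  configurations.  A general normalisation lemma then writes any vector supported on two
  distinct basis configurations as \<open>\<alpha> |z>|\<psi>0> + \<beta> |w>|\<psi>1>\<close> with unit \<open>\<psi>0, \<psi>1\<close> and
  \<open>|\<alpha>|^2 + |\<beta>|^2 = 1\<close>.  Finally, relabelling the honest participants by a permutation is a
  surjective reindexing of the honest qubits which fixes both the all-zero and the all-one
  configuration, so a state of this form is invariant under it.

  The argument only uses which amplitudes can be nonzero.
\<close>

definition sqnorm :: "('a::finite \<Rightarrow> complex) \<Rightarrow> real" where
  "sqnorm v = (\<Sum>x\<in>UNIV. (cmod (v x))^2)"

lemma sqnorm_nonneg: "sqnorm v \<ge> 0"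
  unfolding sqnorm_def by (simp add: sum_nonneg)

lemma unit_vec_scale:
  fixes f :: "'c::finite \<Rightarrow> complex"
  shows "\<exists>\<psi>. unit_vec \<psi> \<and> (\<forall>c. f c = complex_of_real (sqrt (sqnorm f)) * \<psi> c)"
proof (cases "sqnorm f = 0")
  case True
  then have "\<forall>c. f c = 0"
    unfolding sqnorm_def by (simp add: sum_nonneg_eq_0_iff)
  moreover have "unit_vec (\<lambda>c::'c. if c = undefined then 1 else 0)"
    unfolding unit_vec_def by (simp add: if_distrib[of "\<lambda>z. (cmod z)^2"] cong: if_cong)
  ultimately show ?thesis using True by auto
next
  case False
  then have s: "sqnorm f > 0" using sqnorm_nonneg[of f] by linarith
  let ?\<psi> = "\<lambda>c. f c / complex_of_real (sqrt (sqnorm f))"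
  have "(\<Sum>x\<in>UNIV. (cmod (?\<psi> x))^2) = (\<Sum>x\<in>UNIV. (cmod (f x))^2 / sqnorm f)"
    using s by (simp add: norm_divide power_divide)
  also have "\<dots> = 1"
    using s by (simp add: sum_divide_distrib[symmetric] sqnorm_def[symmetric])
  finally have "unit_vec ?\<psi>" unfolding unit_vec_def .
  then show ?thesis using s by auto
qed

lemma two_point_normalisation:
  fixes P :: "'h \<times> 'c::finite \<Rightarrow> complex" and A :: "'h set"
  assumes "finite A" and "z \<in> A" and "w \<in> A" and "z \<noteq> w"
    and supp: "\<And>h c. h \<noteq> z \<Longrightarrow> h \<noteq> w \<Longrightarrow> P (h, c) = 0"
    and pos: "p > 0" and p_eq: "p = (\<Sum>h\<in>A. \<Sum>c\<in>UNIV. (cmod (P (h, c)))^2)"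
  shows "\<exists>\<alpha> \<beta> (\<psi>0 :: 'c \<Rightarrow> complex) \<psi>1.
           unit_vec \<psi>0 \<and> unit_vec \<psi>1 \<and> (cmod \<alpha>)^2 + (cmod \<beta>)^2 = 1 \<and>
           (\<forall>h c. P (h, c) / complex_of_real (sqrt p) =
              \<alpha> * (if h = z then \<psi>0 c else 0) + \<beta> * (if h = w then \<psi>1 c else 0))"
proof -
  define p0 where "p0 = sqnorm (\<lambda>c. P (z, c))"
  define p1 where "p1 = sqnorm (\<lambda>c. P (w, c))"
  have "p = (\<Sum>h\<in>{z, w}. \<Sum>c\<in>UNIV. (cmod (P (h, c)))^2)"
    unfolding p_eq using assms(1-3) supp
    by (intro sum.mono_neutral_right) auto
  then have p_split: "p = p0 + p1"
    using \<open>z \<noteq> w\<close> unfolding p0_def p1_def sqnorm_def by simp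
  obtain \<psi>0 where u0: "unit_vec \<psi>0" and d0: "\<forall>c. P (z, c) = complex_of_real (sqrt p0) * \<psi>0 c"
    using unit_vec_scale[of "\<lambda>c. P (z, c)"] unfolding p0_def by blast
  obtain \<psi>1 where u1: "unit_vec \<psi>1" and d1: "\<forall>c. P (w, c) = complex_of_real (sqrt p1) * \<psi>1 c"
    using unit_vec_scale[of "\<lambda>c. P (w, c)"] unfolding p1_def by blast
  define \<alpha> where "\<alpha> = complex_of_real (sqrt p0 / sqrt p)"
  define \<beta> where "\<beta> = complex_of_real (sqrt p1 / sqrt p)"
  have "(cmod \<alpha>)^2 + (cmod \<beta>)^2 = p0 / p + p1 / p"
    unfolding \<alpha>_def \<beta>_def p0_def p1_def
    using pos by (simp only: norm_of_real power2_abs) (simp add: power_divide sqnorm_nonneg)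
  also have "\<dots> = 1" using pos p_split by (simp add: add_divide_distrib[symmetric])
  finally have norm: "(cmod \<alpha>)^2 + (cmod \<beta>)^2 = 1" .
  have "P (h, c) / complex_of_real (sqrt p) =
          \<alpha> * (if h = z then \<psi>0 c else 0) + \<beta> * (if h = w then \<psi>1 c else 0)" for h c
    using \<open>z \<noteq> w\<close> d0 d1 supp[of h c] pos unfolding \<alpha>_def \<beta>_def by auto
  then show ?thesis using u0 u1 norm by blast
qed

lemma finite_cfg: "finite S \<Longrightarrow> finite (cfg S)"
proof -
  assume "finite S"
  have "cfg S \<subseteq> (\<lambda>B x. x \<in> B) ` Pow S"
  proof
    fix f assume "f \<in> cfg S"
    then have "Collect f \<in> Pow S" unfolding cfg_def by auto
    then show "f \<in> (\<lambda>B x. x \<in> B) ` Pow S" by (rule rev_image_eqI) simp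
  qed
  then show ?thesis using \<open>finite S\<close> by (meson finite_Pow_iff finite_imageI finite_subset)
qed

lemma finite_HQ: "H \<subseteq> {..<n} \<Longrightarrow> finite (HQ n H)"
  unfolding HQ_def
  by (rule finite_subset[of _ "{..<n} \<times> {..<n}"]) auto

lemma consistent_success_constant:
  assumes "H \<subseteq> {..<n}" and "i0 \<in> H"
    and cfg: "h \<in> cfg (HQ n H)"
    and copies: "\<forall>i\<in>H. \<forall>k\<in>H. h (i, k) = h (k, k)"
    and success: "honest_success n H h"
  shows "h = (\<lambda>q. h (i0, i0) \<and> q \<in> HQ n H)"
proof
  fix q :: "nat \<times> nat"
  obtain i k where q: "q = (i, k)" by (cases q)
  show "h q = (h (i0, i0) \<and> q \<in> HQ n H)"
  proof (cases "q \<in> HQ n H")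
    case True
    then have i: "i \<in> H" "k < n" using q unfolding HQ_def by simp_all
    have "i0 < n" using assms(1,2) by blast
    have "h (i, k) = h (i, i)" using success i unfolding honest_success_def by blast
    also have "\<dots> = h (i, i0)" using success i(1) \<open>i0 < n\<close> unfolding honest_success_def by metis
    also have "\<dots> = h (i0, i0)" using copies i(1) \<open>i0 \<in> H\<close> by blast
    finally show ?thesis using True q by simp
  next
    case False
    then show ?thesis using cfg unfolding cfg_def by blast
  qed
qed

lemma projected_pre_state_support:
  assumes "H \<subseteq> {..<n}" and "H \<noteq> {}"
    and "projected n H (pre_state n H \<Phi> V) (h, c) \<noteq> 0"
  shows "h = (\<lambda>_. False) \<or> h = (\<lambda>q. q \<in> HQ n H)"
proof -
  obtain i0 where "i0 \<in> H" using assms(2) by blast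
  from assms(3) have success: "honest_success n H h"
    and nz: "pre_state n H \<Phi> V (h, c) \<noteq> 0"
    unfolding projected_def by (auto split: if_splits)
  from nz have "h \<in> cfg (HQ n H) \<and> (\<forall>i\<in>H. \<forall>k\<in>H. h (i, k) = h (k, k))"
    unfolding pre_state_def case_prod_conv by (rule contrapos_np) (simp only: if_not_P if_False)
  then have "h = (\<lambda>q. h (i0, i0) \<and> q \<in> HQ n H)"
    using consistent_success_constant assms(1) \<open>i0 \<in> H\<close> success by blast
  then show ?thesis by (cases "h (i0, i0)") auto
qed

text \<open>Reindexing configurations along a surjection is injective, so it maps a
  configuration onto a reindexing-invariant one only if it already was that one.\<close>
lemma reindex_fixed_iff:
  assumes "surj \<tau>" and "g \<circ> \<tau> = g"
  shows "h \<circ> \<tau> = g \<longleftrightarrow> h = g"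
proof
  assume eq: "h \<circ> \<tau> = g"
  show "h = g"
  proof
    fix q
    obtain q' where "q = \<tau> q'" using assms(1) by blast
    then show "h q = g q" using eq assms(2) by (metis comp_apply)
  qed
qed (use assms(2) in simp)

lemma honest_relabel:
  assumes "bij_betw \<sigma> H H" and "H \<subseteq> {..<n}"
  defines "s \<equiv> \<lambda>i. if i \<in> H then \<sigma> i else i"
  shows "surj (\<lambda>(i, k). (s i, s k))"
    and "\<And>q. (\<lambda>(i, k). (s i, s k)) q \<in> HQ n H \<longleftrightarrow> q \<in> HQ n H"
proof -
  have s_onto: "\<exists>i. s i = a" for a
  proof (cases "a \<in> H")
    case True
    then have "a \<in> \<sigma> ` H" using assms(1) by (simp add: bij_betw_def)
    then obtain i where "i \<in> H" "\<sigma> i = a" by blast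
    then show ?thesis unfolding s_def by auto
  qed (auto simp: s_def)
  have "(a, b) \<in> range (\<lambda>(i, k). (s i, s k))" for a b
  proof -
    obtain i k where "s i = a" "s k = b" using s_onto by metis
    then show ?thesis by (auto intro: range_eqI[of _ _ "(i, k)"])
  qed
  then show "surj (\<lambda>(i, k). (s i, s k))" by (metis UNIV_eq_I surj_pair)
  have s_H: "s i \<in> H \<longleftrightarrow> i \<in> H" for i
    using bij_betw_apply[OF assms(1)] unfolding s_def by auto
  have s_n: "s i < n \<longleftrightarrow> i < n" for i
    using bij_betw_apply[OF assms(1)] assms(2) unfolding s_def by auto
  show "(\<lambda>(i, k). (s i, s k)) q \<in> HQ n H \<longleftrightarrow> q \<in> HQ n H" for q
    using s_H s_n unfolding HQ_def by (cases q) simp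
qed

lemma ghz_form_relabel_invariant:
  assumes "bij_betw \<sigma> H H" and "H \<subseteq> {..<n}"
    and form: "\<And>h c. F (h, c) = \<alpha> * (if h = (\<lambda>_. False) then \<psi>0 c else 0) +
                                  \<beta> * (if h = (\<lambda>q. q \<in> HQ n H) then \<psi>1 c else 0)"
  shows "F ((\<lambda>(i, k). h ((if i \<in> H then \<sigma> i else i), (if k \<in> H then \<sigma> k else k))), c)
         = F (h, c)"
proof -
  define \<tau> where "\<tau> = (\<lambda>(i, k). ((if i \<in> H then \<sigma> i else i), (if k \<in> H then \<sigma> k else k)))"
  have surj: "surj \<tau>" and HQ: "\<And>q. \<tau> q \<in> HQ n H \<longleftrightarrow> q \<in> HQ n H"
    using honest_relabel[OF assms(1,2)] unfolding \<tau>_def by blast+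
  have zero: "h \<circ> \<tau> = (\<lambda>_. False) \<longleftrightarrow> h = (\<lambda>_. False)"
    by (rule reindex_fixed_iff[OF surj]) auto
  have one: "h \<circ> \<tau> = (\<lambda>q. q \<in> HQ n H) \<longleftrightarrow> h = (\<lambda>q. q \<in> HQ n H)"
    by (rule reindex_fixed_iff[OF surj]) (auto simp: HQ)
  have "(\<lambda>(i, k). h ((if i \<in> H then \<sigma> i else i), (if k \<in> H then \<sigma> k else k))) = h \<circ> \<tau>"
    unfolding \<tau>_def by (auto simp: fun_eq_iff)
  then show ?thesis using zero one by (simp add: form)
qed

theorem lemma1:
  fixes n :: nat and H :: "nat set"
    and \<Phi> :: "(nat \<Rightarrow> bool) \<times> 'r::finite \<Rightarrow> complex"
    and V :: "(nat \<times> nat \<Rightarrow> bool) \<times> 'c::finite \<Rightarrow> (nat \<times> nat \<Rightarrow> bool) \<times> 'r \<Rightarrow> complex"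
  assumes "n \<ge> 2" and "H \<subseteq> {..<n}" and "H \<noteq> {}"
    and "init_state H \<Phi>"
    and "isometry_C n H V"
    and "success_prob n H (pre_state n H \<Phi> V) > 0"
  shows "\<exists>\<alpha> \<beta> (\<psi>0 :: 'c \<Rightarrow> complex) \<psi>1.
           unit_vec \<psi>0 \<and> unit_vec \<psi>1 \<and> (cmod \<alpha>)^2 + (cmod \<beta>)^2 = 1 \<and>
           (\<forall>h c. post_state n H (pre_state n H \<Phi> V) (h, c) =
              \<alpha> * (if h = (\<lambda>_. False) then \<psi>0 c else 0) +
              \<beta> * (if h = (\<lambda>p. p \<in> HQ n H) then \<psi>1 c else 0))
         \<and> (\<forall>\<sigma>. bij_betw \<sigma> H H \<longrightarrow>
              (\<forall>h c. post_state n H (pre_state n H \<Phi> V)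
                        ((\<lambda>(i, k). h ((if i \<in> H then \<sigma> i else i), (if k \<in> H then \<sigma> k else k))), c)
                     = post_state n H (pre_state n H \<Phi> V) (h, c)))"
proof -
  define \<Psi> where "\<Psi> = pre_state n H \<Phi> V"
  obtain i0 where "i0 \<in> H" using assms(3) by blast
  with assms(2) have "(i0, i0) \<in> HQ n H" unfolding HQ_def by auto
  then have distinct: "(\<lambda>_::nat \<times> nat. False) \<noteq> (\<lambda>q. q \<in> HQ n H)" by metis
  have in_cfg: "(\<lambda>_. False) \<in> cfg (HQ n H)" "(\<lambda>q. q \<in> HQ n H) \<in> cfg (HQ n H)"
    unfolding cfg_def by auto
  have supp: "\<And>h c. h \<noteq> (\<lambda>_. False) \<Longrightarrow> h \<noteq> (\<lambda>q. q \<in> HQ n H) \<Longrightarrow> projected n H \<Psi> (h, c) = 0"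
    using projected_pre_state_support[OF assms(2,3)] unfolding \<Psi>_def by blast
  obtain \<alpha> \<beta> and \<psi>0 \<psi>1 :: "'c \<Rightarrow> complex"
    where units: "unit_vec \<psi>0" "unit_vec \<psi>1" "(cmod \<alpha>)^2 + (cmod \<beta>)^2 = 1"
      and normalised: "\<forall>h c. projected n H \<Psi> (h, c) / complex_of_real (sqrt (success_prob n H \<Psi>)) =
             \<alpha> * (if h = (\<lambda>_. False) then \<psi>0 c else 0) +
             \<beta> * (if h = (\<lambda>q. q \<in> HQ n H) then \<psi>1 c else 0)"
    using two_point_normalisation[OF finite_cfg[OF finite_HQ[OF assms(2)]] in_cfg distinct supp
        assms(6)[folded \<Psi>_def] success_prob_def]
    by blast
  have form: "\<And>h c. post_state n H \<Psi> (h, c) =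
             \<alpha> * (if h = (\<lambda>_. False) then \<psi>0 c else 0) +
             \<beta> * (if h = (\<lambda>q. q \<in> HQ n H) then \<psi>1 c else 0)"
    using normalised unfolding post_state_def by simp
  have invariant: "\<And>\<sigma> h c. bij_betw \<sigma> H H \<Longrightarrow> post_state n H \<Psi>
                        ((\<lambda>(i, k). h ((if i \<in> H then \<sigma> i else i), (if k \<in> H then \<sigma> k else k))), c)
                     = post_state n H \<Psi> (h, c)"
    by (rule ghz_form_relabel_invariant[OF _ assms(2) form])
  show ?thesis unfolding \<Psi>_def[symmetric] using units form invariant by blast
qed

end
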